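(* Let $h>0$, $0<\alpha\le 2$, $N=2^n$, and $M=2^m$ with $M\ge 2N$. Let $c_r$, $A^{(N)}_{\alpha,h}$, $\widetilde A^{(M)}_{\alpha,h}$, $P_{N\to M}$, $\lambda_{\max}$ and $U^{(M)}_{\rm BE}$ be as in the context. Then \[ P_{N\to M}^{\dagger}\,\widetilde A^{(M)}_{\alpha,h}\,P_{N\to M}=A^{(N)}_{\alpha,h}+E^{(M)}, \] where $E^{(M)}$ is the $N\times N$ matrix with entries $(E^{(M)})_{ij}=\sum_{\ell\neq 0}c_{i-j+\ell M}$ for $0\le i,j\le N-1$. Consequently, \[ (P_{N\to M}^{\dagger}\otimes\langle 0|)\,U^{(M)}_{\rm BE}\,(P_{N\to M}\otimes|0\rangle)=\frac{A^{(N)}_{\alpha,h}+E^{(M)}}{\lambda_{\max}}. \]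
   Context: Kernel: for $r\in\mathbb Z$, $c_r=\frac{h}{2\pi}\int_{-\pi/h}^{\pi/h}|\xi|^\alpha e^{i\xi h r}\,d\xi$. $A^{(N)}_{\alpha,h}$ is the $N\times N$ Toeplitz matrix (indices $0,\ldots,N-1$) with entries $c_{i-j}$ (the open zero-extension semi-discrete fractional Laplacian). For a size $L=2^\ell$, the FFT-ordered grid is $\bar\xi_k=2\pi k/(Lh)$ for $0\le k<L/2$ and $\bar\xi_k=2\pi k/(Lh)-2\pi/h$ for $L/2\le k<L$; $QFT_L$ is the unitary matrix with entries $(QFT_L)_{kj}=L^{-1/2}e^{2\pi i jk/L}$; and $\widetilde A^{(L)}_{\alpha,h}=QFT_L^{-1}\operatorname{diag}(|\bar\xi_k|^\alpha)_{k=0}^{L-1}QFT_L$. $P_{N\to M}:\mathbb C^N\to\mathbb C^M$ is the zero-padding isometry $P_{N\to M}(u_0,\ldots,u_{N-1})=(u_0,\ldots,u_{N-1},0,\ldots,0)$. Let $\lambda_{\max}=(\pi/h)^\alpha$ and, on the size-$M$ grid, $\phi_k=|\bar\xi_k|^\alpha/\lambda_{\max}\in[0,1]$. Let $U_D$ be a unitary on $\mathbb C^M\otimes\mathbb C^2$ with $U_D|k\rangle|0\rangle=|k\rangle(\phi_k|0\rangle+\sqrt{1-\phi_k^2}\,|1\rangle)$ for all $k$, and $U^{(M)}_{\rm BE}=(QFT_M^{-1}\otimes I)\,U_D\,(QFT_M\otimes I)$. *)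

theory Defs
  imports "HOL-Analysis.Analysis" "Jordan_Normal_Form.Matrix"
begin

definition kernel_c :: "real \<Rightarrow> real \<Rightarrow> int \<Rightarrow> complex" where
  "kernel_c h \<alpha> r = complex_of_real (h / (2 * pi)) *
     integral {-pi/h..pi/h} (\<lambda>\<xi>::real. complex_of_real (\<bar>\<xi>\<bar> powr \<alpha>) * cis (\<xi> * h * of_int r))"

definition A_mat :: "real \<Rightarrow> real \<Rightarrow> nat \<Rightarrow> complex mat" where
  "A_mat h \<alpha> N = mat N N (\<lambda>(i,j). kernel_c h \<alpha> (int i - int j))"

(* FFT-ordered frequency grid of size L *)
definition xi_bar :: "real \<Rightarrow> nat \<Rightarrow> nat \<Rightarrow> real" where
  "xi_bar h L k = (if k < L div 2 then 2 * pi * real k / (real L * h)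
                   else 2 * pi * real k / (real L * h) - 2 * pi / h)"

definition ctrans :: "complex mat \<Rightarrow> complex mat" where
  "ctrans A = mat (dim_col A) (dim_row A) (\<lambda>(i,j). cnj (A $$ (j,i)))"

definition QFT :: "nat \<Rightarrow> complex mat" where
  "QFT L = mat L L (\<lambda>(k,j). complex_of_real (1 / sqrt (real L)) * cis (2 * pi * real j * real k / real L))"

(* QFT_L^{-1}; QFT_L is unitary, so its inverse is its conjugate transpose *)
definition QFT_inv :: "nat \<Rightarrow> complex mat" where
  "QFT_inv L = ctrans (QFT L)"

definition diag_of :: "nat \<Rightarrow> (nat \<Rightarrow> complex) \<Rightarrow> complex mat" where
  "diag_of L d = mat L L (\<lambda>(i,j). if i = j then d i else 0)"

definition A_tilde :: "real \<Rightarrow> real \<Rightarrow> nat \<Rightarrow> complex mat" where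
  "A_tilde h \<alpha> L = QFT_inv L * diag_of L (\<lambda>k. complex_of_real (\<bar>xi_bar h L k\<bar> powr \<alpha>)) * QFT L"

definition pad :: "nat \<Rightarrow> nat \<Rightarrow> complex mat" where
  "pad N M = mat M N (\<lambda>(i,j). if i = j then 1 else 0)"

definition E_mat :: "real \<Rightarrow> real \<Rightarrow> nat \<Rightarrow> nat \<Rightarrow> complex mat" where
  "E_mat h \<alpha> N M = mat N N (\<lambda>(i,j).
     infsum (\<lambda>l::int. kernel_c h \<alpha> (int i - int j + l * int M)) (UNIV - {0}))"

definition lambda_max :: "real \<Rightarrow> real \<Rightarrow> real" where
  "lambda_max h \<alpha> = (pi / h) powr \<alpha>"

definition phi :: "real \<Rightarrow> real \<Rightarrow> nat \<Rightarrow> nat \<Rightarrow> real" where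
  "phi h \<alpha> M k = \<bar>xi_bar h M k\<bar> powr \<alpha> / lambda_max h \<alpha>"

(* Kronecker product; for C^a (x) C^b the basis vector |i>|j> has index i*b + j *)
definition kron :: "complex mat \<Rightarrow> complex mat \<Rightarrow> complex mat" where
  "kron A B = mat (dim_row A * dim_row B) (dim_col A * dim_col B)
     (\<lambda>(i,j). A $$ (i div dim_row B, j div dim_col B) * B $$ (i mod dim_row B, j mod dim_col B))"

definition ket0 :: "complex mat" where "ket0 = mat 2 1 (\<lambda>(i,j). if i = 0 then 1 else 0)"
definition bra0 :: "complex mat" where "bra0 = mat 1 2 (\<lambda>(i,j). if j = 0 then 1 else 0)"

definition unitary_mat :: "nat \<Rightarrow> complex mat \<Rightarrow> bool" where
  "unitary_mat n U \<longleftrightarrow> U \<in> carrier_mat n n \<and> ctrans U * U = 1\<^sub>m n \<and> U * ctrans U = 1\<^sub>m n"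

definition U_BE :: "nat \<Rightarrow> complex mat \<Rightarrow> complex mat" where
  "U_BE M UD = kron (QFT_inv M) (1\<^sub>m 2) * UD * kron (QFT M) (1\<^sub>m 2)"

end

theory Submission
  imports Defs
begin


definition fourier_coeff :: "real \<Rightarrow> (real \<Rightarrow> real) \<Rightarrow> int \<Rightarrow> complex" where
  "fourier_coeff h f r = complex_of_real (h / (2 * pi)) *
     integral {-pi/h..pi/h} (\<lambda>\<xi>. complex_of_real (f \<xi>) * cis (\<xi> * h * of_int r))"

lemma kernel_c_eq_fourier_coeff: "kernel_c h \<alpha> = fourier_coeff h (\<lambda>\<xi>. \<bar>\<xi>\<bar> powr \<alpha>)"
  by (simp add: fun_eq_iff kernel_c_def fourier_coeff_def)

lemma integral_of_real_complex:
  "f integrable_on S \<Longrightarrow> integral S (\<lambda>x. complex_of_real (f x)) = complex_of_real (integral S f)"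
  using integral_linear[OF _ bounded_linear_of_real, of f S] by (simp add: o_def)

lemma integral_even_real:
  fixes f :: "real \<Rightarrow> real"
  assumes "f integrable_on {-T..T}" and "0 \<le> T" and "\<And>x. f (-x) = f x"
  shows "integral {-T..T} f = 2 * integral {0..T} f"
proof -
  have "integral {-T..T} f = integral {-T..0} f + integral {0..T} f"
    using Henstock_Kurzweil_Integration.integral_combine[where a="-T" and c=0 and b=T and f=f] assms(1,2) by simp
  moreover have "integral {-T..0} f = integral {0..T} f"
    using Henstock_Kurzweil_Integration.integral_reflect_real[where a=0 and b=T and f=f] assms(3) by simp
  ultimately show ?thesis by simp
qed

lemma fourier_coeff_even:
  assumes h: "0 < h" and f: "continuous_on {-pi/h..pi/h} f" and even: "\<And>\<xi>. f (-\<xi>) = f \<xi>"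
  shows "fourier_coeff h f r = complex_of_real (h / pi * integral {0..pi/h} (\<lambda>t. f t * cos (h * r * t)))"
proof -
  define T where "T = pi / h"
  define g where "g \<xi> = complex_of_real (f \<xi>) * cis (\<xi> * h * of_int r)" for \<xi>
  have dom: "{-pi/h..pi/h} = {-T..T}" by (simp add: T_def)
  have f_cos: "continuous_on {-T..T} (\<lambda>t. f t * cos (h * r * t))"
    using f unfolding dom by (intro continuous_intros)
  have "continuous_on {-T..T} g"
    using f[unfolded dom] unfolding g_def by (intro continuous_intros continuous_on_of_real) 
  then have "g integrable_on {-T..T}" by (rule integrable_continuous_interval)
  moreover have "integral {-T..T} (\<lambda>\<xi>. g (-\<xi>)) = integral {-T..T} g"
    using Henstock_Kurzweil_Integration.integral_reflect_real[where a="-T" and b=T and f=g] by simp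
  ultimately have "2 * integral {-T..T} g = integral {-T..T} (\<lambda>\<xi>. g \<xi> + g (-\<xi>))"
    using integral_add[where f=g and S="{-T..T}" and g="\<lambda>\<xi>. g (-\<xi>)"]
      Henstock_Kurzweil_Integration.integrable_reflect_real[where f=g and a="-T" and b=T] by simp
  also have "\<dots> = integral {-T..T} (\<lambda>t. complex_of_real (2 * (f t * cos (h * r * t))))"
  proof (rule integral_cong)
    fix t
    have "g t + g (-t) = complex_of_real (f t) * (cis (t * h * r) + cis (- (t * h * r)))"
      by (simp add: g_def even distrib_left)
    also have "cis (t * h * r) + cis (- (t * h * r)) = complex_of_real (2 * cos (h * r * t))"
      by (simp add: complex_eq_iff mult.commute mult.left_commute)
    finally show "g t + g (-t) = complex_of_real (2 * (f t * cos (h * r * t)))"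
      by simp
  qed
  also have "\<dots> = complex_of_real (integral {-T..T} (\<lambda>t. 2 * (f t * cos (h * r * t))))"
    by (intro integral_of_real_complex integrable_on_mult_right integrable_continuous_interval f_cos)
  also have "\<dots> = complex_of_real (4 * integral {0..T} (\<lambda>t. f t * cos (h * r * t)))"
    using integral_even_real[of "\<lambda>t. f t * cos (h * r * t)" T] f_cos h
    by (simp add: integrable_continuous_interval even T_def)
  finally show ?thesis
    unfolding fourier_coeff_def dom g_def[symmetric] by (simp add: T_def)
qed

lemma norm_cis_minus_one: "cmod (cis u - 1) = 2 * \<bar>sin (u/2)\<bar>"
proof -
  have "(cmod (cis u - 1))\<^sup>2 = (cos u - 1)\<^sup>2 + (sin u)\<^sup>2"
    by (simp add: cmod_power2)
  also have "\<dots> = 2 - 2 * cos u"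
    by (simp add: power2_eq_square algebra_simps sin_squared_eq)
  also have "\<dots> = (2 * \<bar>sin (u/2)\<bar>)\<^sup>2"
    using cos_double_sin[of "u/2"] by (simp add: power_mult_distrib)
  finally show ?thesis
    by (metis abs_ge_zero mult_nonneg_nonneg norm_ge_zero power2_eq_imp_eq zero_le_numeral)
qed

lemma has_integral_cis_period:
  fixes h x :: real and m :: int
  assumes h: "0 < h"
  shows "((\<lambda>\<xi>. cis (m * (h * (\<xi> - x)))) has_integral
           (if m = 0 then complex_of_real (2*pi/h) else 0)) {-pi/h..pi/h}"
proof (cases "m = 0")
  case True
  then show ?thesis
    using has_integral_const_real[of "1::complex" "-pi/h" "pi/h"] h by (simp add: scaleR_conv_of_real)
next
  case False
  define w where "w = m * h"
  have w0: "w \<noteq> 0" using False h by (simp add: w_def)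
  define F where "F = (\<lambda>\<xi>. cis (w * (\<xi> - x)) / (\<i> * w))"
  have F_deriv: "(F has_vector_derivative cis (w * (\<xi> - x))) (at \<xi> within S)" for \<xi> S
  proof -
    have "((\<lambda>z. exp (\<i> * (w * (z - x)))) has_field_derivative
            exp (\<i> * (w * (\<xi> - x))) * (\<i> * w)) (at (of_real \<xi>))"
      by (auto intro!: derivative_eq_intros)
    from has_vector_derivative_real_field[OF this, of S]
    have "((\<lambda>\<xi>. cis (w * (\<xi> - x))) has_vector_derivative (\<i> * w * cis (w * (\<xi> - x)))) (at \<xi> within S)"
      by (simp add: cis_conv_exp mult.commute mult.left_commute)
    from has_vector_derivative_divide[OF this, of "\<i> * w"] show ?thesis
      using w0 by (simp add: F_def)
  qed
  have "w * (pi/h - x) = w * (-pi/h - x) + 2 * pi * m"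
    using h by (simp add: w_def field_simps)
  then have "F (pi/h) = F (-pi/h) * cis (2 * pi * m)"
    by (simp only: F_def cis_mult times_divide_eq_left)
  then have "F (pi/h) = F (-pi/h)" by simp
  moreover have "-pi/h \<le> pi/h" using h by (simp add: divide_right_mono)
  ultimately show ?thesis
    using False fundamental_theorem_of_calculus[OF _ F_deriv, of "-pi/h" "pi/h"]
    by (simp add: w_def mult.assoc)
qed

definition fejer_kernel :: "nat \<Rightarrow> real \<Rightarrow> real" where
  "fejer_kernel L u = (cmod (\<Sum>j<Suc L. cis (real j * u)))\<^sup>2 / real (Suc L)"

lemma fejer_kernel_nonneg: "0 \<le> fejer_kernel L u"
  by (simp add: fejer_kernel_def)

lemma fejer_kernel_double_sum:
  "complex_of_real (fejer_kernel L u) = (\<Sum>j<Suc L. \<Sum>k<Suc L. cis ((real j - real k) * u)) / of_nat (Suc L)"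
proof -
  define P where "P = (\<Sum>j<Suc L. cis (real j * u))"
  have "(\<Sum>j<Suc L. \<Sum>k<Suc L. cis ((real j - real k) * u)) = P * cnj P"
    by (simp add: P_def cnj_sum cis_cnj sum_product cis_mult left_diff_distrib del: sum.lessThan_Suc)
  also have "\<dots> = complex_of_real ((cmod P)\<^sup>2)"
    by (rule complex_norm_square[symmetric])
  finally show ?thesis
    by (simp add: fejer_kernel_def P_def del: sum.lessThan_Suc of_nat_Suc)
qed

lemma fejer_kernel_sin_bound: "fejer_kernel L u * (sin (u/2))\<^sup>2 \<le> 1 / real (Suc L)"
proof -
  define P where "P = (\<Sum>j<Suc L. cis (real j * u))"
  have "P = (\<Sum>j<Suc L. cis u ^ j)"
    unfolding P_def by (rule sum.cong) (simp_all only: Complex.DeMoivre)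
  then have "1 - cis u ^ Suc L = (1 - cis u) * P"
    by (simp only: one_diff_power_eq)
  then have "cmod (cis u - 1) * cmod P = cmod (1 - cis u ^ Suc L)"
    by (metis norm_minus_commute norm_mult)
  also have "\<dots> \<le> 2"
    using norm_triangle_ineq4[of 1 "cis u ^ Suc L"] by (simp add: norm_mult norm_power)
  finally have "(cmod P * \<bar>sin (u/2)\<bar>)\<^sup>2 \<le> 1"
    by (simp add: norm_cis_minus_one abs_square_le_1 mult.commute)
  then show ?thesis
    by (simp add: fejer_kernel_def P_def power_mult_distrib divide_right_mono del: sum.lessThan_Suc)
qed

lemma continuous_on_fejer_kernel: "continuous_on S (\<lambda>\<xi>. fejer_kernel L (h * (\<xi> - x)))"
  unfolding fejer_kernel_def by (intro continuous_intros) simp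

lemma integral_fejer_kernel:
  assumes h: "0 < h"
  shows "integral {-pi/h..pi/h} (\<lambda>\<xi>. fejer_kernel L (h * (\<xi> - x))) = 2*pi/h"
proof -
  define I where "I = {-pi/h..pi/h}"
  have cis_I: "((\<lambda>\<xi>. cis ((real j - real k) * (h * (\<xi> - x)))) has_integral
      (if j = k then complex_of_real (2*pi/h) else 0)) I" for j k
    using has_integral_cis_period[OF h, of "int j - int k" x] by (simp add: I_def)
  have "((\<lambda>\<xi>. complex_of_real (fejer_kernel L (h * (\<xi> - x)))) has_integral
      (\<Sum>j<Suc L. \<Sum>k<Suc L. if j = k then complex_of_real (2*pi/h) else 0) / of_nat (Suc L)) I"
    unfolding fejer_kernel_double_sum
    by (intro has_integral_divide has_integral_sum finite_lessThan cis_I)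
  then have "((\<lambda>\<xi>. complex_of_real (fejer_kernel L (h * (\<xi> - x)))) has_integral
      complex_of_real (2*pi/h)) I"
    by (simp del: sum.lessThan_Suc of_nat_Suc)
  moreover have "(\<lambda>\<xi>. fejer_kernel L (h * (\<xi> - x))) integrable_on I"
    unfolding I_def by (intro integrable_continuous_interval continuous_on_fejer_kernel)
  ultimately have "complex_of_real (integral I (\<lambda>\<xi>. fejer_kernel L (h * (\<xi> - x)))) = complex_of_real (2*pi/h)"
    by (simp add: integral_of_real_complex[symmetric] integral_unique)
  then show ?thesis
    unfolding I_def of_real_eq_iff .
qed

definition fejer_mean :: "real \<Rightarrow> (real \<Rightarrow> real) \<Rightarrow> nat \<Rightarrow> real \<Rightarrow> real" where
  "fejer_mean h f L x = h / (2*pi) * integral {-pi/h..pi/h} (\<lambda>\<xi>. f \<xi> * fejer_kernel L (h * (\<xi> - x)))"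

lemma fejer_mean_eq_cesaro_mean:
  assumes h: "0 < h" and f: "continuous_on {-pi/h..pi/h} f"
  shows "complex_of_real (fejer_mean h f L x) =
    (\<Sum>j<Suc L. \<Sum>k<Suc L. fourier_coeff h f (int j - int k) * cis (- (of_int (int j - int k) * h * x)))
      / of_nat (Suc L)"
proof -
  define I where "I = {-pi/h..pi/h}"
  define g where "g = (\<lambda>(j::nat) (k::nat) \<xi>. complex_of_real (f \<xi>) * cis (\<xi> * h * of_int (int j - int k)))"
  have g_int: "g j k integrable_on I" for j k
    unfolding g_def I_def using f by (intro integrable_continuous_interval continuous_intros continuous_on_of_real)
  have g_coeff: "complex_of_real (h / (2*pi)) * integral I (g j k) = fourier_coeff h f (int j - int k)" for j k
    by (simp add: fourier_coeff_def g_def I_def)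
  have "complex_of_real (f \<xi> * fejer_kernel L (h * (\<xi> - x)))
      = (\<Sum>j<Suc L. \<Sum>k<Suc L. g j k \<xi> * cis (- (of_int (int j - int k) * h * x))) / of_nat (Suc L)" for \<xi>
  proof -
    have "cis ((real j - real k) * (h * (\<xi> - x)))
        = cis (\<xi> * h * of_int (int j - int k)) * cis (- (of_int (int j - int k) * h * x))" for j k
      by (simp add: cis_mult algebra_simps)
    then show ?thesis
      unfolding of_real_mult fejer_kernel_double_sum
      by (simp add: g_def sum_distrib_left mult.assoc del: sum.lessThan_Suc)
  qed
  then have "integral I (\<lambda>\<xi>. complex_of_real (f \<xi> * fejer_kernel L (h * (\<xi> - x))))
      = (\<Sum>j<Suc L. \<Sum>k<Suc L. integral I (g j k) * cis (- (of_int (int j - int k) * h * x))) / of_nat (Suc L)"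
    by (simp add: integral_sum integrable_sum integrable_on_mult_left g_int del: sum.lessThan_Suc)
  moreover have "(\<lambda>\<xi>. f \<xi> * fejer_kernel L (h * (\<xi> - x))) integrable_on I"
    unfolding I_def using f by (intro integrable_continuous_interval continuous_intros continuous_on_fejer_kernel)
  ultimately have "complex_of_real (fejer_mean h f L x) = complex_of_real (h / (2*pi)) *
      ((\<Sum>j<Suc L. \<Sum>k<Suc L. integral I (g j k) * cis (- (of_int (int j - int k) * h * x))) / of_nat (Suc L))"
    unfolding fejer_mean_def of_real_mult[of "h / (2*pi)"] I_def by (simp only: integral_of_real_complex)
  also have "\<dots> = (\<Sum>j<Suc L. \<Sum>k<Suc L. (complex_of_real (h / (2*pi)) * integral I (g j k))
      * cis (- (of_int (int j - int k) * h * x))) / of_nat (Suc L)"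
    by (simp add: sum_distrib_left mult.assoc del: sum.lessThan_Suc)
  finally show ?thesis
    by (simp only: g_coeff)
qed

lemma fejer_mean_minus_eq:
  assumes h: "0 < h" and f: "continuous_on {-pi/h..pi/h} f"
  shows "fejer_mean h f L x - f x
    = h / (2*pi) * integral {-pi/h..pi/h} (\<lambda>\<xi>. (f \<xi> - f x) * fejer_kernel L (h * (\<xi> - x)))"
proof -
  define I where "I = {-pi/h..pi/h}"
  define K where "K = (\<lambda>\<xi>. fejer_kernel L (h * (\<xi> - x)))"
  have K_int: "K integrable_on I"
    unfolding K_def I_def by (intro integrable_continuous_interval continuous_on_fejer_kernel)
  have fK_int: "(\<lambda>\<xi>. f \<xi> * K \<xi>) integrable_on I"
    unfolding K_def I_def using f by (intro integrable_continuous_interval continuous_intros continuous_on_fejer_kernel)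
  have "integral I (\<lambda>\<xi>. (f \<xi> - f x) * K \<xi>) = integral I (\<lambda>\<xi>. f \<xi> * K \<xi>) - f x * (2*pi/h)"
    using integral_diff[OF fK_int integrable_on_mult_right[OF K_int, of "f x"]] integral_fejer_kernel[OF h]
    by (simp add: K_def I_def left_diff_distrib)
  moreover have "fejer_mean h f L x - f x = h / (2*pi) * (integral I (\<lambda>\<xi>. f \<xi> * K \<xi>) - f x * (2*pi/h))"
    using h by (simp add: fejer_mean_def I_def K_def right_diff_distrib)
  ultimately show ?thesis
    by (simp add: I_def K_def)
qed

lemma abs_fejer_mean_minus_le:
  assumes h: "0 < h" and f: "continuous_on {-pi/h..pi/h} f"
    and bound: "\<And>\<xi>. \<xi> \<in> {-pi/h..pi/h} \<Longrightarrow>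
      \<bar>f \<xi> - f x\<bar> * fejer_kernel L (h * (\<xi> - x)) \<le> e * fejer_kernel L (h * (\<xi> - x)) + C"
  shows "\<bar>fejer_mean h f L x - f x\<bar> \<le> e + C"
proof -
  define I where "I = {-pi/h..pi/h}"
  define K where "K = (\<lambda>\<xi>. fejer_kernel L (h * (\<xi> - x)))"
  have K_int: "K integrable_on I"
    unfolding K_def I_def by (intro integrable_continuous_interval continuous_on_fejer_kernel)
  have "norm (integral I (\<lambda>\<xi>. (f \<xi> - f x) * K \<xi>)) \<le> integral I (\<lambda>\<xi>. e * K \<xi> + C)"
  proof (rule integral_norm_bound_integral)
    show "(\<lambda>\<xi>. (f \<xi> - f x) * K \<xi>) integrable_on I"
      unfolding K_def I_def using f by (intro integrable_continuous_interval continuous_intros continuous_on_fejer_kernel)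
    show "(\<lambda>\<xi>. e * K \<xi> + C) integrable_on I"
      unfolding I_def using K_int[unfolded I_def] by (intro integrable_add integrable_on_mult_right) auto
    show "norm ((f \<xi> - f x) * K \<xi>) \<le> e * K \<xi> + C" if "\<xi> \<in> I" for \<xi>
      using bound[of \<xi>] that fejer_kernel_nonneg unfolding I_def K_def by (simp add: abs_mult)
  qed
  also have "integral I (\<lambda>\<xi>. e * K \<xi> + C) = e * integral I K + C * (2*pi/h)"
    using integral_add[OF integrable_on_mult_right[OF K_int, of e] integrable_const_ivl[of C "-pi/h" "pi/h", folded I_def]] h
    by (simp add: I_def)
  also have "\<dots> = (e + C) * (2*pi/h)"
    using integral_fejer_kernel[OF h] by (simp add: I_def K_def distrib_right add_divide_distrib)
  finally have "\<bar>integral I (\<lambda>\<xi>. (f \<xi> - f x) * K \<xi>)\<bar> \<le> (e + C) * (2*pi/h)"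
    by simp
  then have "h / (2*pi) * \<bar>integral I (\<lambda>\<xi>. (f \<xi> - f x) * K \<xi>)\<bar> \<le> h / (2*pi) * ((e + C) * (2*pi/h))"
    using h by (intro mult_left_mono) auto
  then show ?thesis
    using h fejer_mean_minus_eq[OF h f, of L x] by (simp add: I_def K_def abs_mult)
qed

lemma abs_cos_diff_le: "\<bar>cos a - cos b\<bar> \<le> 2 * \<bar>sin ((a - b) / 2)\<bar>" for a b :: real
proof -
  have "(b - a) / 2 = - ((a - b) / 2)"
    by (simp add: minus_divide_left)
  then have "\<bar>cos a - cos b\<bar> = \<bar>sin ((a + b) / 2)\<bar> * (2 * \<bar>sin ((a - b) / 2)\<bar>)"
    by (simp only: cos_diff_cos sin_minus abs_mult abs_minus_cancel abs_numeral mult_ac)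
  also have "\<dots> \<le> 1 * (2 * \<bar>sin ((a - b) / 2)\<bar>)"
    by (intro mult_right_mono) simp_all
  finally show ?thesis
    by simp
qed

lemma even_eq_arccos_cos:
  fixes f :: "real \<Rightarrow> real"
  assumes h: "0 < h" and \<xi>: "\<xi> \<in> {-pi/h..pi/h}" and even: "\<And>\<xi>. f (-\<xi>) = f \<xi>"
  shows "f \<xi> = f (arccos (cos (h * \<xi>)) / h)"
proof -
  have "-pi \<le> h * \<xi>" "h * \<xi> \<le> pi"
    using \<xi> h by (auto simp: field_simps)
  then have "0 \<le> h * \<bar>\<xi>\<bar>" "h * \<bar>\<xi>\<bar> \<le> pi"
    using h by (auto simp: abs_if)
  then have "arccos (cos (h * \<bar>\<xi>\<bar>)) = h * \<bar>\<xi>\<bar>"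
    by (rule arccos_cos)
  moreover have "cos (h * \<xi>) = cos (h * \<bar>\<xi>\<bar>)"
    by (cases "0 \<le> \<xi>") simp_all
  ultimately have "arccos (cos (h * \<xi>)) / h = \<bar>\<xi>\<bar>"
    using h by simp
  then show ?thesis
    by (simp add: abs_if even)
qed

lemma continuous_on_arccos_rescaled:
  assumes h: "0 < h" and f: "continuous_on {-pi/h..pi/h} f"
  shows "continuous_on {-1..1} (\<lambda>c. f (arccos c / h))"
proof (rule continuous_on_compose2[OF f])
  show "continuous_on {-1..1} (\<lambda>c. arccos c / h)"
    using h by (intro continuous_on_divide continuous_on_arccos' continuous_on_const) auto
  show "(\<lambda>c. arccos c / h) ` {-1..1} \<subseteq> {-pi/h..pi/h}"
  proof
    fix y assume "y \<in> (\<lambda>c. arccos c / h) ` {-1..1}"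
    then obtain c where c: "c \<in> {-1..1}" and y: "y = arccos c / h"
      by blast
    have "-pi \<le> arccos c" "arccos c \<le> pi"
      using arccos_lbound[of c] arccos_ubound[of c] c pi_gt_zero by auto
    then show "y \<in> {-pi/h..pi/h}"
      using divide_right_mono[of "-pi" "arccos c" h] divide_right_mono[of "arccos c" pi h] h
      unfolding y by auto
  qed
qed

lemma even_continuous_uniform_chordal:
  fixes f :: "real \<Rightarrow> real"
  assumes h: "0 < h" and f: "continuous_on {-pi/h..pi/h} f" and even: "\<And>\<xi>. f (-\<xi>) = f \<xi>"
    and e: "0 < e"
  shows "\<exists>\<eta>>0. \<forall>\<xi>\<in>{-pi/h..pi/h}. \<forall>x\<in>{-pi/h..pi/h}.
           \<bar>sin (h * (\<xi> - x) / 2)\<bar> < \<eta> \<longrightarrow> \<bar>f \<xi> - f x\<bar> < e"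
proof -
  define F where "F c = f (arccos c / h)" for c
  have "uniformly_continuous_on {-1..1} F"
    unfolding F_def using continuous_on_arccos_rescaled[OF h f] by (rule compact_uniformly_continuous) simp
  then obtain \<delta> where \<delta>: "0 < \<delta>"
    and close: "\<And>c c'. c \<in> {-1..1} \<Longrightarrow> c' \<in> {-1..1} \<Longrightarrow> dist c' c < \<delta> \<Longrightarrow> dist (F c') (F c) < e"
    using uniformly_continuous_onE[OF _ e] by blast
  show ?thesis
  proof (intro exI[of _ "\<delta> / 2"] conjI ballI impI)
    fix \<xi> x assume \<xi>: "\<xi> \<in> {-pi/h..pi/h}" and x: "x \<in> {-pi/h..pi/h}"
      and small: "\<bar>sin (h * (\<xi> - x) / 2)\<bar> < \<delta> / 2"
    have half_diff: "(h * \<xi> - h * x) / 2 = h * (\<xi> - x) / 2"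
      by (simp add: right_diff_distrib)
    have "\<bar>cos (h * \<xi>) - cos (h * x)\<bar> \<le> 2 * \<bar>sin (h * (\<xi> - x) / 2)\<bar>"
      using abs_cos_diff_le[of "h * \<xi>" "h * x"] unfolding half_diff .
    then have "dist (cos (h * \<xi>)) (cos (h * x)) < \<delta>"
      using small unfolding dist_real_def by linarith
    then show "\<bar>f \<xi> - f x\<bar> < e"
      using close[of "cos (h * x)" "cos (h * \<xi>)"]
        even_eq_arccos_cos[where f=f, OF h \<xi> even] even_eq_arccos_cos[where f=f, OF h x even]
      by (simp add: F_def dist_real_def)
  qed (use \<delta> in simp)
qed

lemma abs_mult_fejer_kernel_le:
  assumes "0 < \<eta>" and "\<bar>g\<bar> \<le> B" and near: "\<bar>sin (u/2)\<bar> < \<eta> \<Longrightarrow> \<bar>g\<bar> \<le> e" and "0 \<le> e"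
  shows "\<bar>g\<bar> * fejer_kernel L u \<le> e * fejer_kernel L u + B / (real (Suc L) * \<eta>\<^sup>2)"
proof (cases "\<bar>sin (u/2)\<bar> < \<eta>")
  case True
  then have "\<bar>g\<bar> * fejer_kernel L u \<le> e * fejer_kernel L u"
    using near by (intro mult_right_mono) (simp_all add: fejer_kernel_nonneg)
  moreover have "0 \<le> B / (real (Suc L) * \<eta>\<^sup>2)"
    using \<open>\<bar>g\<bar> \<le> B\<close> by (simp add: order_trans[OF abs_ge_zero])
  ultimately show ?thesis
    by linarith
next
  case False
  then have "\<eta>\<^sup>2 \<le> \<bar>sin (u/2)\<bar>\<^sup>2"
    using \<open>0 < \<eta>\<close> by (intro power_mono) auto
  then have "fejer_kernel L u * \<eta>\<^sup>2 \<le> fejer_kernel L u * (sin (u/2))\<^sup>2"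
    by (intro mult_left_mono) (simp_all add: fejer_kernel_nonneg)
  also have "\<dots> \<le> 1 / real (Suc L)"
    by (rule fejer_kernel_sin_bound)
  finally have "fejer_kernel L u * (real (Suc L) * \<eta>\<^sup>2) \<le> 1"
    by (simp add: pos_le_divide_eq mult_ac del: of_nat_Suc)
  then have "fejer_kernel L u \<le> 1 / (real (Suc L) * \<eta>\<^sup>2)"
    using \<open>0 < \<eta>\<close> by (simp add: pos_le_divide_eq del: of_nat_Suc)
  then have "\<bar>g\<bar> * fejer_kernel L u \<le> B * (1 / (real (Suc L) * \<eta>\<^sup>2))"
    using \<open>\<bar>g\<bar> \<le> B\<close> by (intro mult_mono) (simp_all add: fejer_kernel_nonneg order_trans[OF abs_ge_zero])
  moreover have "0 \<le> e * fejer_kernel L u"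
    using \<open>0 \<le> e\<close> by (simp add: fejer_kernel_nonneg)
  ultimately show ?thesis
    by simp
qed

theorem fejer_mean_tendsto:
  assumes h: "0 < h" and f: "continuous_on {-pi/h..pi/h} f" and even: "\<And>\<xi>. f (-\<xi>) = f \<xi>"
    and x: "x \<in> {-pi/h..pi/h}"
  shows "(\<lambda>L. fejer_mean h f L x) \<longlonglongrightarrow> f x"
proof (rule LIMSEQ_I)
  fix r :: real assume "0 < r"
  define I where "I = {-pi/h..pi/h}"
  define e where "e = r / 2"
  have e: "0 < e" using \<open>0 < r\<close> by (simp add: e_def)
  obtain \<eta> where \<eta>: "0 < \<eta>" and close: "\<forall>\<xi>\<in>I. \<bar>sin (h * (\<xi> - x) / 2)\<bar> < \<eta> \<longrightarrow> \<bar>f \<xi> - f x\<bar> < e"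
    using even_continuous_uniform_chordal[OF h f even e] x unfolding I_def by blast
  have "bounded ((\<lambda>\<xi>. f \<xi> - f x) ` I)"
    unfolding I_def by (intro compact_imp_bounded compact_continuous_image continuous_intros f) simp
  then obtain B where "\<forall>y \<in> (\<lambda>\<xi>. f \<xi> - f x) ` I. norm y \<le> B"
    unfolding bounded_iff by blast
  then have B: "\<And>\<xi>. \<xi> \<in> I \<Longrightarrow> \<bar>f \<xi> - f x\<bar> \<le> B"
    by auto
  obtain L0 :: nat where L0: "B / (\<eta>\<^sup>2 * e) < L0"
    using reals_Archimedean2 by blast
  show "\<exists>L0. \<forall>L\<ge>L0. norm (fejer_mean h f L x - f x) < r"
  proof (intro exI allI impI)
    fix L assume "L0 \<le> L"
    have "B / (\<eta>\<^sup>2 * e) < real (Suc L)"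
      using L0 \<open>L0 \<le> L\<close> by linarith
    then have "B < real (Suc L) * \<eta>\<^sup>2 * e"
      using \<eta> e by (simp add: pos_divide_less_eq mult_ac)
    then have small: "B / (real (Suc L) * \<eta>\<^sup>2) < e"
      using \<eta> by (simp add: pos_divide_less_eq mult_ac)
    have "\<bar>fejer_mean h f L x - f x\<bar> \<le> e + B / (real (Suc L) * \<eta>\<^sup>2)"
      using close B e \<eta> unfolding I_def
      by (intro abs_fejer_mean_minus_le[OF h f] abs_mult_fejer_kernel_le) auto
    then show "norm (fejer_mean h f L x - f x) < r"
      using small unfolding e_def real_norm_def by linarith
  qed
qed

lemma sum_le_except_ends:
  fixes E :: "nat \<Rightarrow> real"
  assumes all: "\<And>j. j \<le> L \<Longrightarrow> E j \<le> B" and middle: "\<And>j. K \<le> j \<Longrightarrow> j + K \<le> L \<Longrightarrow> E j \<le> e"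
    and "0 \<le> e" "0 \<le> B"
  shows "(\<Sum>j<Suc L. E j) \<le> real (Suc L) * e + 2 * real K * B"
proof -
  define ends where "ends = {..<Suc L} \<inter> ({..<K} \<union> {j. L < j + K})"
  have "E j \<le> e + (if j \<in> ends then B else 0)" if "j < Suc L" for j
  proof (cases "j \<in> ends")
    case True
    then show ?thesis using all[of j] that \<open>0 \<le> e\<close> by simp
  next
    case False
    then show ?thesis using middle[of j] that by (simp add: ends_def not_less)
  qed
  then have "(\<Sum>j<Suc L. E j) \<le> (\<Sum>j<Suc L. e + (if j \<in> ends then B else 0))"
    by (intro sum_mono) simp
  also have "\<dots> = real (Suc L) * e + real (card ends) * B"
    using sum.inter_restrict[of "{..<Suc L}" "\<lambda>_. B" "{..<K} \<union> {j. L < j + K}"]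
    by (simp add: sum.distrib ends_def del: sum.lessThan_Suc)
  also have "\<dots> \<le> real (Suc L) * e + 2 * real K * B"
  proof (rule add_left_mono, rule mult_right_mono)
    have "card ends \<le> card ({..<K} \<union> {Suc L - K..<Suc L})"
      by (intro card_mono) (auto simp: ends_def)
    then show "real (card ends) \<le> 2 * real K"
      using card_Un_le[of "{..<K}" "{Suc L - K..<Suc L}"] by simp
  qed (rule \<open>0 \<le> B\<close>)
  finally show ?thesis .
qed

lemma has_sum_int_interval_close:
  fixes a :: "int \<Rightarrow> 'a::real_normed_vector"
  assumes "(a has_sum A) UNIV" and "0 < e"
  shows "\<exists>K::nat. \<forall>m n. m \<le> - int K \<longrightarrow> int K \<le> n \<longrightarrow> dist (sum a {m..n}) A < e"
proof -
  have "\<forall>\<^sub>F Y in finite_subsets_at_top UNIV. dist (sum a Y) A < e"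
    using assms unfolding has_sum_def tendsto_iff by blast
  then have "\<exists>F0. finite F0 \<and> F0 \<subseteq> UNIV \<and> (\<forall>Y. finite Y \<and> F0 \<subseteq> Y \<and> Y \<subseteq> UNIV \<longrightarrow> dist (sum a Y) A < e)"
    unfolding eventually_finite_subsets_at_top .
  then obtain F0 where "finite F0"
    and F0: "\<forall>Y. finite Y \<and> F0 \<subseteq> Y \<and> Y \<subseteq> UNIV \<longrightarrow> dist (sum a Y) A < e"
    by blast
  define K where "K = nat (Max (insert 0 (abs ` F0)))"
  have K: "\<bar>s\<bar> \<le> int K" if "s \<in> F0" for s
  proof -
    have "\<bar>s\<bar> \<le> Max (insert 0 (abs ` F0))"
      using \<open>finite F0\<close> that by (intro Max_ge) auto
    then show ?thesis
      unfolding K_def by linarith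
  qed
  show ?thesis
  proof (intro exI allI impI)
    fix m n assume "m \<le> - int K" "int K \<le> n"
    have "F0 \<subseteq> {m..n}"
    proof
      fix s assume "s \<in> F0"
      then show "s \<in> {m..n}"
        using K[of s] \<open>m \<le> - int K\<close> \<open>int K \<le> n\<close> by (simp add: abs_le_iff)
    qed
    then show "dist (sum a {m..n}) A < e"
      using F0 by simp
  qed
qed

lemma norm_cesaro_double_sum_minus_le:
  fixes a :: "int \<Rightarrow> complex"
  assumes S: "\<And>Y. finite Y \<Longrightarrow> norm (sum a Y) \<le> S" and "norm A \<le> S"
    and K: "\<And>m n. m \<le> - int K \<Longrightarrow> int K \<le> n \<Longrightarrow> norm (sum a {m..n} - A) \<le> e" and "0 \<le> e"
  shows "norm ((\<Sum>j<Suc L. \<Sum>k<Suc L. a (int j - int k)) / of_nat (Suc L) - A)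
           \<le> e + 4 * real K * S / real (Suc L)"
proof -
  define E where "E j = norm ((\<Sum>k<Suc L. a (int j - int k)) - A)" for j
  have row: "(\<Sum>k<Suc L. a (int j - int k)) = sum a {int j - int L..int j}" for j
    by (rule sum.reindex_bij_witness[of _ "\<lambda>s. nat (int j - s)" "\<lambda>k. int j - int k"]) auto
  have "E j \<le> 2 * S" for j
    using norm_triangle_ineq4[of "sum a {int j - int L..int j}" A] S[of "{int j - int L..int j}"] \<open>norm A \<le> S\<close>
    unfolding E_def row by simp
  moreover have "E j \<le> e" if "K \<le> j" "j + K \<le> L" for j
    using K[of "int j - int L" "int j"] that unfolding E_def row by simp
  moreover have "0 \<le> S"
    using \<open>norm A \<le> S\<close> by (rule order_trans[OF norm_ge_zero])
  ultimately have "(\<Sum>j<Suc L. E j) \<le> real (Suc L) * e + 2 * real K * (2 * S)"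
    using \<open>0 \<le> e\<close> by (intro sum_le_except_ends) auto
  then have "(\<Sum>j<Suc L. E j) \<le> real (Suc L) * e + 4 * real K * S"
    by linarith
  then have "(\<Sum>j<Suc L. E j) / real (Suc L) \<le> (real (Suc L) * e + 4 * real K * S) / real (Suc L)"
    by (rule divide_right_mono) simp
  also have "\<dots> = e + 4 * real K * S / real (Suc L)"
    by (simp add: add_divide_distrib del: of_nat_Suc)
  finally have "(\<Sum>j<Suc L. E j) / real (Suc L) \<le> e + 4 * real K * S / real (Suc L)" .
  moreover have "(\<Sum>j<Suc L. \<Sum>k<Suc L. a (int j - int k)) / of_nat (Suc L) - A
      = (\<Sum>j<Suc L. (\<Sum>k<Suc L. a (int j - int k)) - A) / of_nat (Suc L)"
    by (simp add: sum_subtractf diff_divide_distrib del: sum.lessThan_Suc of_nat_Suc)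
  then have "norm ((\<Sum>j<Suc L. \<Sum>k<Suc L. a (int j - int k)) / of_nat (Suc L) - A)
      \<le> (\<Sum>j<Suc L. E j) / real (Suc L)"
    unfolding E_def by (simp add: norm_divide divide_right_mono norm_sum del: sum.lessThan_Suc of_nat_Suc)
  ultimately show ?thesis
    by linarith
qed

theorem cesaro_double_sum_tendsto:
  fixes a :: "int \<Rightarrow> complex"
  assumes abs_sum: "(\<lambda>s. norm (a s)) summable_on UNIV"
  shows "(\<lambda>L. (\<Sum>j<Suc L. \<Sum>k<Suc L. a (int j - int k)) / of_nat (Suc L)) \<longlonglongrightarrow> infsum a UNIV"
proof (rule LIMSEQ_I)
  fix r :: real assume "0 < r"
  define A where "A = infsum a UNIV"
  define S where "S = infsum (\<lambda>s. norm (a s)) UNIV"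
  define e where "e = r / 2"
  have e: "0 < e" using \<open>0 < r\<close> by (simp add: e_def)
  have S: "norm (sum a Y) \<le> S" if "finite Y" for Y
  proof -
    have "norm (sum a Y) \<le> (\<Sum>s\<in>Y. norm (a s))"
      by (rule norm_sum)
    also have "\<dots> \<le> S"
      unfolding S_def by (rule finite_sum_le_infsum[OF abs_sum that]) simp_all
    finally show ?thesis .
  qed
  have "norm A \<le> S"
    unfolding A_def S_def using abs_sum by (rule norm_infsum_bound)
  have "(a has_sum A) UNIV"
    using abs_sum unfolding A_def by (simp add: summable_on_iff_abs_summable_on_complex)
  then obtain K :: nat where K: "\<forall>m n. m \<le> - int K \<longrightarrow> int K \<le> n \<longrightarrow> dist (sum a {m..n}) A < e"
    using has_sum_int_interval_close e by blast
  obtain L0 :: nat where L0: "4 * real K * S / e < L0"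
    using reals_Archimedean2 by blast
  show "\<exists>L0. \<forall>L\<ge>L0. norm ((\<Sum>j<Suc L. \<Sum>k<Suc L. a (int j - int k)) / of_nat (Suc L) - infsum a UNIV) < r"
  proof (intro exI allI impI)
    fix L assume "L0 \<le> L"
    have "4 * real K * S < e * real L0"
      using L0 e by (simp add: pos_divide_less_eq mult.commute)
    also have "\<dots> \<le> e * real (Suc L)"
      using e \<open>L0 \<le> L\<close> by (intro mult_left_mono) auto
    finally have "4 * real K * S / real (Suc L) < e"
      by (simp add: pos_divide_less_eq mult.commute del: of_nat_Suc)
    moreover have "norm ((\<Sum>j<Suc L. \<Sum>k<Suc L. a (int j - int k)) / of_nat (Suc L) - A)
        \<le> e + 4 * real K * S / real (Suc L)"
      using K e by (intro norm_cesaro_double_sum_minus_le[OF S \<open>norm A \<le> S\<close>]) (auto simp: dist_norm intro: less_imp_le)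
    ultimately show "norm ((\<Sum>j<Suc L. \<Sum>k<Suc L. a (int j - int k)) / of_nat (Suc L) - infsum a UNIV) < r"
      by (simp add: A_def e_def)
  qed
qed

theorem fourier_series_has_sum:
  assumes h: "0 < h" and f: "continuous_on {-pi/h..pi/h} f" and even: "\<And>\<xi>. f (-\<xi>) = f \<xi>"
    and abs_sum: "(\<lambda>s. norm (fourier_coeff h f s)) summable_on UNIV"
    and x: "x \<in> {-pi/h..pi/h}"
  shows "((\<lambda>s. fourier_coeff h f s * cis (- (of_int s * h * x))) has_sum complex_of_real (f x)) UNIV"
proof -
  define a where "a = (\<lambda>s. fourier_coeff h f s * cis (- (of_int s * h * x)))"
  have a_abs: "(\<lambda>s. norm (a s)) summable_on UNIV"
    using abs_sum by (simp add: a_def norm_mult)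
  have "(\<lambda>L. complex_of_real (fejer_mean h f L x)) \<longlonglongrightarrow> infsum a UNIV"
    using cesaro_double_sum_tendsto[OF a_abs]
    by (simp add: fejer_mean_eq_cesaro_mean[OF h f] a_def del: sum.lessThan_Suc of_nat_Suc)
  moreover have "(\<lambda>L. complex_of_real (fejer_mean h f L x)) \<longlonglongrightarrow> complex_of_real (f x)"
    by (intro tendsto_of_real fejer_mean_tendsto[OF h f even x])
  ultimately have "infsum a UNIV = complex_of_real (f x)"
    by (rule LIMSEQ_unique)
  moreover have "a summable_on UNIV"
    using a_abs summable_on_iff_abs_summable_on_complex by blast
  ultimately show ?thesis
    unfolding a_def by (metis has_sum_infsum)
qed


lemma continuous_on_abs_powr: "0 < a \<Longrightarrow> continuous_on S (\<lambda>x::real. \<bar>x\<bar> powr a)"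
  unfolding continuous_on_def by (auto intro!: tendsto_powr' tendsto_intros)

lemma abs_integral_powr_cos_initial:
  fixes a d w :: real
  assumes "0 < a" and "0 \<le> d"
  shows "\<bar>integral {0..d} (\<lambda>t. \<bar>t\<bar> powr a * cos (w*t))\<bar> \<le> d * d powr a"
proof -
  have "norm (integral {0..d} (\<lambda>t. \<bar>t\<bar> powr a * cos (w*t))) \<le> integral {0..d} (\<lambda>t. d powr a)"
  proof (rule integral_norm_bound_integral)
    show "(\<lambda>t. \<bar>t\<bar> powr a * cos (w*t)) integrable_on {0..d}"
      using assms by (intro integrable_continuous_interval continuous_intros continuous_on_abs_powr)
    show "norm (\<bar>t\<bar> powr a * cos (w*t)) \<le> d powr a" if "t \<in> {0..d}" for t
    proof -
      have "\<bar>t\<bar> powr a * \<bar>cos (w*t)\<bar> \<le> \<bar>t\<bar> powr a"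
        by (rule mult_right_le_one_le) auto
      also have "\<dots> \<le> d powr a"
        using that assms by (auto intro: powr_mono2)
      finally show ?thesis
        by (simp add: abs_mult)
    qed
  qed auto
  then show ?thesis using assms by simp
qed

lemma has_real_derivative_powr_sin_cos:
  fixes a w t :: real
  assumes "0 < t" "w \<noteq> 0"
  shows "((\<lambda>t. t powr a * sin (w*t) / w + a * t powr (a-1) * cos (w*t) / w\<^sup>2) has_real_derivative
           t powr a * cos (w*t) + a / w\<^sup>2 * ((a-1) * t powr (a-2) * cos (w*t))) (at t)"
proof -
  have "t powr (a - 1 - 1) = t powr (a-2)" by simp
  with assms show ?thesis
    by (auto intro!: derivative_eq_intros simp: field_simps power2_eq_square)
qed

lemma abs_integral_powr_deriv_cos_le:
  fixes a d w T :: real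
  assumes "0 < d" "d \<le> T"
  shows "\<bar>integral {d..T} (\<lambda>t. (a-1) * t powr (a-2) * cos (w*t))\<bar> \<le> T powr (a-1) + d powr (a-1)"
proof -
  define s where "s = (if 1 \<le> a then 1 else -1 :: real)"
  have ftc: "((\<lambda>t. (a-1) * t powr (a-2)) has_integral (T powr (a-1) - d powr (a-1))) {d..T}"
  proof (rule fundamental_theorem_of_calculus[OF \<open>d \<le> T\<close>])
    fix t assume "t \<in> {d..T}"
    then have "0 < t" using assms by simp
    then have "((\<lambda>t. t powr (a-1)) has_real_derivative (a-1) * t powr (a-2)) (at t)"
      using has_real_derivative_powr[of t "a-1"] by simp
    then show "((\<lambda>t. t powr (a-1)) has_vector_derivative (a-1) * t powr (a-2)) (at t within {d..T})"
      by (simp add: has_real_derivative_iff_has_vector_derivative has_vector_derivative_at_within)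
  qed
  have "norm (integral {d..T} (\<lambda>t. (a-1) * t powr (a-2) * cos (w*t)))
      \<le> integral {d..T} (\<lambda>t. s * ((a-1) * t powr (a-2)))"
  proof (rule integral_norm_bound_integral)
    show "(\<lambda>t. (a-1) * t powr (a-2) * cos (w*t)) integrable_on {d..T}"
      using assms by (intro integrable_continuous_interval continuous_intros) auto
    show "(\<lambda>t. s * ((a-1) * t powr (a-2))) integrable_on {d..T}"
      using has_integral_integrable[OF has_integral_mult_right[OF ftc, of s]] .
    show "norm ((a-1) * t powr (a-2) * cos (w*t)) \<le> s * ((a-1) * t powr (a-2))" for t
    proof -
      have "norm ((a-1) * t powr (a-2) * cos (w*t)) = \<bar>a-1\<bar> * t powr (a-2) * \<bar>cos (w*t)\<bar>"
        by (simp add: abs_mult)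
      also have "\<dots> \<le> \<bar>a-1\<bar> * t powr (a-2)"
        by (rule mult_right_le_one_le) auto
      also have "\<dots> = s * ((a-1) * t powr (a-2))"
        by (simp add: s_def)
      finally show ?thesis .
    qed
  qed
  also have "\<dots> = s * (T powr (a-1) - d powr (a-1))"
    using integral_unique[OF has_integral_mult_right[OF ftc, of s]] .
  also have "\<dots> \<le> T powr (a-1) + d powr (a-1)"
    by (auto simp: s_def)
  finally show ?thesis by simp
qed

lemma integral_powr_cos_by_parts:
  fixes a w d T :: real
  assumes a: "0 < a" and d: "0 < d" "d \<le> T" and w: "w \<noteq> 0"
  defines "G \<equiv> \<lambda>t. t powr a * sin (w*t) / w + a * t powr (a-1) * cos (w*t) / w\<^sup>2"
  shows "integral {d..T} (\<lambda>t. \<bar>t\<bar> powr a * cos (w*t))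
    = G T - G d - a / w\<^sup>2 * integral {d..T} (\<lambda>t. (a-1) * t powr (a-2) * cos (w*t))"
proof -
  have R_int: "(\<lambda>t. (a-1) * t powr (a-2) * cos (w*t)) integrable_on {d..T}"
    using d by (intro integrable_continuous_interval continuous_intros) auto
  have H: "((\<lambda>t. \<bar>t\<bar> powr a * cos (w*t) + a / w\<^sup>2 * ((a-1) * t powr (a-2) * cos (w*t)))
      has_integral G T - G d) {d..T}"
  proof (rule fundamental_theorem_of_calculus[OF d(2)])
    fix t assume "t \<in> {d..T}"
    then have "0 < t" using d by simp
    then show "(G has_vector_derivative
        \<bar>t\<bar> powr a * cos (w*t) + a / w\<^sup>2 * ((a-1) * t powr (a-2) * cos (w*t))) (at t within {d..T})"
      using has_real_derivative_powr_sin_cos[where t=t and w=w and a=a] w unfolding G_def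
      by (simp add: has_real_derivative_iff_has_vector_derivative has_vector_derivative_at_within)
  qed
  have "(\<lambda>t. \<bar>t\<bar> powr a * cos (w*t)) integrable_on {d..T}"
    by (intro integrable_continuous_interval continuous_on_mult continuous_on_abs_powr[OF a] continuous_intros)
  then have "integral {d..T} (\<lambda>t. \<bar>t\<bar> powr a * cos (w*t) + a / w\<^sup>2 * ((a-1) * t powr (a-2) * cos (w*t)))
      = integral {d..T} (\<lambda>t. \<bar>t\<bar> powr a * cos (w*t))
        + a / w\<^sup>2 * integral {d..T} (\<lambda>t. (a-1) * t powr (a-2) * cos (w*t))"
    by (simp only: integral_add[OF _ integrable_on_mult_right[OF R_int]] integral_mult_right)
  then show ?thesis
    using integral_unique[OF H] by linarith
qed

lemma abs_integral_powr_cos_le: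
  fixes a w T :: real
  assumes a: "0 < a" and w: "0 < w" and "1/w \<le> T" and sin_T: "sin (w*T) = 0"
  shows "\<bar>integral {0..T} (\<lambda>t. \<bar>t\<bar> powr a * cos (w*t))\<bar>
           \<le> (2 + 2*a) * w powr (-1-a) + 2*a * T powr (a-1) / w\<^sup>2"
proof -
  define d where "d = 1/w"
  have d: "0 < d" "d \<le> T" using w assms(3) by (simp_all add: d_def)
  define G where "G t = t powr a * sin (w*t) / w + a * t powr (a-1) * cos (w*t) / w\<^sup>2" for t
  define R where "R = integral {d..T} (\<lambda>t. (a-1) * t powr (a-2) * cos (w*t))"
  have G_T: "\<bar>G T\<bar> \<le> a * T powr (a-1) / w\<^sup>2"
    using sin_T a by (simp add: G_def abs_mult divide_right_mono mult_right_le_one_le)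
  have G_d: "\<bar>G d\<bar> \<le> d powr a / w + a * d powr (a-1) / w\<^sup>2"
    using a w d unfolding G_def
    by (intro abs_triangle_ineq[THEN order_trans] add_mono)
       (auto simp: abs_mult divide_right_mono mult_right_le_one_le)
  have "integral {0..T} (\<lambda>t. \<bar>t\<bar> powr a * cos (w*t))
      = integral {0..d} (\<lambda>t. \<bar>t\<bar> powr a * cos (w*t)) + (G T - G d - a / w\<^sup>2 * R)"
    using d a w Henstock_Kurzweil_Integration.integral_combine[of 0 d T "\<lambda>t. \<bar>t\<bar> powr a * cos (w*t)"]
      integral_powr_cos_by_parts[OF a d, of w]
    by (simp add: G_def R_def integrable_continuous_interval continuous_intros continuous_on_abs_powr)
  moreover have "\<bar>a / w\<^sup>2 * R\<bar> \<le> a / w\<^sup>2 * (T powr (a-1) + d powr (a-1))"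
  proof -
    have "\<bar>a / w\<^sup>2 * R\<bar> = a / w\<^sup>2 * \<bar>R\<bar>"
      using a by (simp add: abs_mult)
    also have "\<dots> \<le> a / w\<^sup>2 * (T powr (a-1) + d powr (a-1))"
      using abs_integral_powr_deriv_cos_le[OF d, of a w] a unfolding R_def by (intro mult_left_mono) simp_all
    finally show ?thesis .
  qed
  moreover have "\<bar>x + (p - q - r)\<bar> \<le> \<bar>x\<bar> + \<bar>p\<bar> + \<bar>q\<bar> + \<bar>r\<bar>" for x p q r :: real
    by arith
  ultimately have "\<bar>integral {0..T} (\<lambda>t. \<bar>t\<bar> powr a * cos (w*t))\<bar>
      \<le> d * d powr a + a * T powr (a-1) / w\<^sup>2 + (d powr a / w + a * d powr (a-1) / w\<^sup>2)
         + a / w\<^sup>2 * (T powr (a-1) + d powr (a-1))"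
    using abs_integral_powr_cos_initial[OF a, of d w] d G_T G_d by (smt (verit))
  also have "\<dots> = (2 + 2*a) * w powr (-1-a) + 2*a * T powr (a-1) / w\<^sup>2"
  proof -
    have d_powr: "d powr a = 1 / w powr a" "d powr (a-1) = w / w powr a"
      using w by (simp_all add: d_def powr_divide powr_diff)
    have w_powr: "w powr (-1-a) = 1 / (w * w powr a)"
      using w powr_minus_divide[of w "1+a"] by (simp add: powr_add)
    have "0 < w powr a"
      using w by simp
    then show ?thesis
      unfolding d_powr w_powr using w by (simp add: d_def field_simps power2_eq_square)
  qed
  finally show ?thesis .
qed

lemma summable_on_int_abs_powr:
  assumes "p < -1"
  shows "(\<lambda>s::int. real_of_int \<bar>s\<bar> powr p) summable_on UNIV"
proof -
  have nat: "(\<lambda>n::nat. real n powr p) summable_on UNIV"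
    using assms by (intro norm_summable_imp_summable_on) (simp add: summable_real_powr_iff)
  have "(\<lambda>s::int. real_of_int \<bar>s\<bar> powr p) summable_on range int"
    using nat by (subst summable_on_reindex) (auto simp: o_def)
  moreover have "(\<lambda>s::int. real_of_int \<bar>s\<bar> powr p) summable_on range (\<lambda>n. - int n)"
    using nat by (subst summable_on_reindex) (auto simp: o_def inj_on_def)
  moreover have "s \<in> range int \<union> range (\<lambda>n. - int n)" for s :: int
  proof (cases "0 \<le> s")
    case True
    then have "s = int (nat s)" by simp
    then show ?thesis by blast
  next
    case False
    then have "s = - int (nat (- s))" by simp
    then show ?thesis by blast
  qed
  ultimately show ?thesis
    by (metis summable_on_union subsetI subset_antisym UNIV_I top_greatest)
qed

lemma kernel_c_eq_cos_integral:
  assumes "0 < h" "0 < \<alpha>"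
  shows "kernel_c h \<alpha> r = complex_of_real (h / pi * integral {0..pi/h} (\<lambda>t. \<bar>t\<bar> powr \<alpha> * cos (h * \<bar>r\<bar> * t)))"
proof -
  have "cos (h * r * t) = cos (h * \<bar>r\<bar> * t)" for t
    by (cases "0 \<le> r") simp_all
  then show ?thesis
    unfolding kernel_c_eq_fourier_coeff using assms
    by (subst fourier_coeff_even) (auto intro: continuous_on_abs_powr)
qed

lemma norm_kernel_c_le:
  assumes h: "0 < h" and \<alpha>: "0 < \<alpha>" and "r \<noteq> 0"
  shows "norm (kernel_c h \<alpha> r) \<le> h / pi * ((2 + 2*\<alpha>) * (h * \<bar>r\<bar>) powr (-1-\<alpha>)
            + 2*\<alpha> * (pi/h) powr (\<alpha>-1) / (h * \<bar>r\<bar>)\<^sup>2)"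
proof -
  define w where "w = h * \<bar>real_of_int r\<bar>"
  have r1: "1 \<le> \<bar>real_of_int r\<bar>" using \<open>r \<noteq> 0\<close> by linarith
  then have "1 \<le> pi * \<bar>real_of_int r\<bar>"
    using pi_ge_two mult_mono[of 1 pi 1 "\<bar>real_of_int r\<bar>"] by simp
  then have "0 < w" "1/w \<le> pi/h"
    using h r1 by (auto simp: w_def field_simps)
  moreover have "sin (w * (pi/h)) = 0"
    using h sin_npi_int[of "\<bar>r\<bar>"] by (simp add: w_def mult.commute)
  ultimately have "\<bar>integral {0..pi/h} (\<lambda>t. \<bar>t\<bar> powr \<alpha> * cos (w*t))\<bar>
      \<le> (2 + 2*\<alpha>) * w powr (-1-\<alpha>) + 2*\<alpha> * (pi/h) powr (\<alpha>-1) / w\<^sup>2"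
    by (intro abs_integral_powr_cos_le[OF \<alpha>])
  then have "h / pi * \<bar>integral {0..pi/h} (\<lambda>t. \<bar>t\<bar> powr \<alpha> * cos (w*t))\<bar>
      \<le> h / pi * ((2 + 2*\<alpha>) * w powr (-1-\<alpha>) + 2*\<alpha> * (pi/h) powr (\<alpha>-1) / w\<^sup>2)"
    using h by (intro mult_left_mono) simp_all
  moreover have "norm (kernel_c h \<alpha> r) = h / pi * \<bar>integral {0..pi/h} (\<lambda>t. \<bar>t\<bar> powr \<alpha> * cos (w*t))\<bar>"
    unfolding kernel_c_eq_cos_integral[OF h \<alpha>] norm_of_real using h by (simp add: abs_mult w_def)
  ultimately show ?thesis
    by (simp only: w_def of_int_abs)
qed

lemma kernel_c_abs_summable:
  assumes h: "0 < h" and \<alpha>: "0 < \<alpha>"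
  shows "(\<lambda>s. norm (kernel_c h \<alpha> s)) summable_on UNIV"
proof -
  define K1 where "K1 = h / pi * (2 + 2*\<alpha>) * h powr (-1-\<alpha>)"
  define K2 where "K2 = h / pi * (2*\<alpha> * (pi/h) powr (\<alpha>-1)) / h\<^sup>2"
  define g where "g s = K1 * real_of_int \<bar>s\<bar> powr (-1-\<alpha>) + K2 * real_of_int \<bar>s\<bar> powr (-2)" for s :: int
  have "g summable_on UNIV"
    unfolding g_def using \<alpha> by (intro summable_on_add summable_on_cmult_right summable_on_int_abs_powr) auto
  then have "(\<lambda>s. norm (kernel_c h \<alpha> s)) summable_on (UNIV - {0})"
  proof (rule summable_on_comparison_test[OF summable_on_subset])
    fix s :: int assume "s \<in> UNIV - {0}"
    then have "s \<noteq> 0" by simp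
    then have "real_of_int \<bar>s\<bar> powr (-2) = 1 / (real_of_int s)\<^sup>2"
      by (simp add: powr_minus_divide powr_realpow[symmetric])
    then have "h / pi * ((2 + 2*\<alpha>) * (h * \<bar>s\<bar>) powr (-1-\<alpha>) + 2*\<alpha> * (pi/h) powr (\<alpha>-1) / (h * \<bar>s\<bar>)\<^sup>2) = g s"
      using h by (simp add: g_def K1_def K2_def powr_mult power_mult_distrib field_simps)
    then show "norm (kernel_c h \<alpha> s) \<le> g s"
      using norm_kernel_c_le[OF h \<alpha> \<open>s \<noteq> 0\<close>] by simp
  qed auto
  then show ?thesis
    using summable_on_insert_iff[of "\<lambda>s. norm (kernel_c h \<alpha> s)" 0 "UNIV - {0}"] by (simp add: insert_absorb)
qed


lemma dim_ctrans [simp]: "dim_row (ctrans A) = dim_col A" "dim_col (ctrans A) = dim_row A"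
  by (simp_all add: ctrans_def)

lemma dim_kron [simp]:
  "dim_row (kron A B) = dim_row A * dim_row B" "dim_col (kron A B) = dim_col A * dim_col B"
  by (simp_all add: kron_def)

lemma carrier_ctrans [simp]: "A \<in> carrier_mat m n \<Longrightarrow> ctrans A \<in> carrier_mat n m"
  unfolding ctrans_def by (metis carrier_matD mat_carrier)

lemma carrier_kron:
  assumes "A \<in> carrier_mat a b" "B \<in> carrier_mat c d"
  shows "kron A B \<in> carrier_mat (a*c) (b*d)"
  using carrier_matD[OF assms(1)] carrier_matD[OF assms(2)] unfolding kron_def by (simp only: mat_carrier)

lemma carrier_bra0 [simp]: "bra0 \<in> carrier_mat 1 2"
  and carrier_ket0 [simp]: "ket0 \<in> carrier_mat 2 1"
  by (simp_all add: bra0_def ket0_def)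

lemma carrier_QFT [simp]: "QFT L \<in> carrier_mat L L"
  unfolding QFT_def by (rule mat_carrier)

lemma carrier_QFT_inv [simp]: "QFT_inv L \<in> carrier_mat L L"
  unfolding QFT_inv_def ctrans_def QFT_def by simp

lemma carrier_diag_of [simp]: "diag_of L d \<in> carrier_mat L L"
  unfolding diag_of_def by (rule mat_carrier)

lemma carrier_pad [simp]: "pad N M \<in> carrier_mat M N"
  unfolding pad_def by (rule mat_carrier)

lemma dim_QFT [simp]:
  "dim_row (QFT L) = L" "dim_col (QFT L) = L" "dim_row (QFT_inv L) = L" "dim_col (QFT_inv L) = L"
  using carrier_matD[OF carrier_QFT[of L]] carrier_matD[OF carrier_QFT_inv[of L]] by auto

lemma carrier_A_tilde [simp]: "A_tilde h \<alpha> L \<in> carrier_mat L L"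
  unfolding A_tilde_def by (rule mult_carrier_mat[OF mult_carrier_mat[OF carrier_QFT_inv carrier_diag_of] carrier_QFT])

lemma index_mult_mat_sum:
  assumes "A \<in> carrier_mat m n" "B \<in> carrier_mat n p" "i < m" "j < p"
  shows "(A * B) $$ (i,j) = (\<Sum>k<n. A $$ (i,k) * B $$ (k,j))"
  using assms by (auto simp: index_mult_mat scalar_prod_def atLeast0LessThan intro: sum.cong)

lemma index_mult_diag_of_mult:
  assumes A: "A \<in> carrier_mat m n" and B: "B \<in> carrier_mat n p" and "i < m" "j < p"
  shows "(A * diag_of n d * B) $$ (i,j) = (\<Sum>k<n. A $$ (i,k) * d k * B $$ (k,j))"
proof -
  have AD: "(A * diag_of n d) $$ (i,k) = A $$ (i,k) * d k" if "k < n" for k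
  proof -
    have "(A * diag_of n d) $$ (i,k) = (\<Sum>l<n. A $$ (i,l) * diag_of n d $$ (l,k))"
      using A \<open>i < m\<close> that by (intro index_mult_mat_sum) auto
    also have "\<dots> = (\<Sum>l<n. if l = k then A $$ (i,l) * d l else 0)"
      using that by (intro sum.cong) (auto simp: diag_of_def)
    finally show ?thesis
      using that by simp
  qed
  have "(A * diag_of n d * B) $$ (i,j) = (\<Sum>k<n. (A * diag_of n d) $$ (i,k) * B $$ (k,j))"
    using A B \<open>i < m\<close> \<open>j < p\<close> by (intro index_mult_mat_sum) auto
  then show ?thesis
    by (simp add: AD)
qed

lemma QFT_conj_diag_index:
  assumes "i < L" "j < L"
  shows "(QFT_inv L * diag_of L d * QFT L) $$ (i,j)
    = (\<Sum>k<L. d k * cis (2 * pi * of_int (int j - int i) * real k / real L)) / of_nat L"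
proof -
  have "QFT_inv L $$ (i,k) * d k * QFT L $$ (k,j)
      = d k * cis (2 * pi * of_int (int j - int i) * real k / real L) / of_nat L" if "k < L" for k
  proof -
    have "complex_of_real (1 / sqrt (real L)) * complex_of_real (1 / sqrt (real L)) = 1 / of_nat L"
      using assms by (simp flip: of_real_mult)
    moreover have "cis (- (2 * pi * real i * real k / real L)) * cis (2 * pi * real j * real k / real L)
        = cis (2 * pi * of_int (int j - int i) * real k / real L)"
      by (simp add: cis_mult algebra_simps diff_divide_distrib)
    ultimately show ?thesis
      using assms that by (simp add: QFT_inv_def ctrans_def QFT_def cis_cnj field_simps)
  qed
  then have "(\<Sum>k<L. QFT_inv L $$ (i,k) * d k * QFT L $$ (k,j))
      = (\<Sum>k<L. d k * cis (2 * pi * of_int (int j - int i) * real k / real L) / of_nat L)"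
    by (intro sum.cong) simp_all
  moreover have "(QFT_inv L * diag_of L d * QFT L) $$ (i,j) = (\<Sum>k<L. QFT_inv L $$ (i,k) * d k * QFT L $$ (k,j))"
    using assms by (intro index_mult_diag_of_mult) auto
  ultimately show ?thesis
    by (simp add: sum_divide_distrib)
qed

lemma mult_mult_selection_mat:
  fixes X :: "'a::semiring_1 mat"
  assumes X: "X \<in> carrier_mat n n" and Q: "Q \<in> carrier_mat N n" and P: "P \<in> carrier_mat n N"
    and \<sigma>: "\<And>i. i < N \<Longrightarrow> \<sigma> i < n"
    and Q_index: "\<And>i a. i < N \<Longrightarrow> a < n \<Longrightarrow> Q $$ (i,a) = (if a = \<sigma> i then 1 else 0)"
    and P_index: "\<And>j a. j < N \<Longrightarrow> a < n \<Longrightarrow> P $$ (a,j) = (if a = \<sigma> j then 1 else 0)"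
  shows "Q * X * P = mat N N (\<lambda>(i,j). X $$ (\<sigma> i, \<sigma> j))"
proof (rule eq_matI)
  fix i j assume "i < dim_row (mat N N (\<lambda>(i,j). X $$ (\<sigma> i, \<sigma> j)))"
    "j < dim_col (mat N N (\<lambda>(i,j). X $$ (\<sigma> i, \<sigma> j)))"
  then have ij: "i < N" "j < N" by auto
  have QX: "(Q * X) $$ (i,a) = X $$ (\<sigma> i, a)" if "a < n" for a
  proof -
    have "(Q * X) $$ (i,a) = (\<Sum>b<n. Q $$ (i,b) * X $$ (b,a))"
      using Q X ij that by (intro index_mult_mat_sum) auto
    also have "\<dots> = (\<Sum>b<n. if b = \<sigma> i then X $$ (b,a) else 0)"
      using ij by (intro sum.cong) (auto simp: Q_index)
    finally show ?thesis
      using \<sigma>[OF ij(1)] by simp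
  qed
  have "(Q * X * P) $$ (i,j) = (\<Sum>a<n. (Q * X) $$ (i,a) * P $$ (a,j))"
    using Q X P ij by (intro index_mult_mat_sum) auto
  also have "\<dots> = (\<Sum>a<n. if a = \<sigma> j then X $$ (\<sigma> i, a) else 0)"
    using ij by (intro sum.cong) (auto simp: P_index QX)
  finally show "(Q * X * P) $$ (i,j) = mat N N (\<lambda>(i,j). X $$ (\<sigma> i, \<sigma> j)) $$ (i,j)"
    using \<sigma>[OF ij(2)] ij by simp
qed (use Q P in auto)

lemma ctrans_pad_mult_pad:
  assumes "N \<le> M" "X \<in> carrier_mat M M"
  shows "ctrans (pad N M) * X * pad N M = mat N N (\<lambda>(i,j). X $$ (i,j))"
proof (rule mult_mult_selection_mat[where \<sigma>=id, unfolded id_apply])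
  fix i a assume "i < N" "a < M"
  then show "ctrans (pad N M) $$ (i,a) = (if a = i then 1 else 0)"
    and "pad N M $$ (a,i) = (if a = i then 1 else 0)"
    by (auto simp: ctrans_def pad_def)
qed (use assms in auto)

lemma kron_pad_mult_kron_pad:
  assumes "N \<le> M" "X \<in> carrier_mat (2*M) (2*M)"
  shows "kron (ctrans (pad N M)) bra0 * X * kron (pad N M) ket0 = mat N N (\<lambda>(i,j). X $$ (2*i, 2*j))"
proof (rule mult_mult_selection_mat[where \<sigma>="\<lambda>i. 2*i"])
  have even_iff: "(a div 2 = i \<and> a mod 2 = 0) = (a = 2*i)" for a i :: nat
    by presburger
  fix i a assume "i < N" "a < 2*M"
  then have "a div 2 < M" by simp
  then show "kron (ctrans (pad N M)) bra0 $$ (i,a) = (if a = 2*i then 1 else 0)"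
    and "kron (pad N M) ket0 $$ (a,i) = (if a = 2*i then 1 else 0)"
    using \<open>i < N\<close> \<open>a < 2*M\<close> even_iff[of a i]
    by (auto simp: kron_def ctrans_def pad_def bra0_def ket0_def)
next
  show "kron (ctrans (pad N M)) bra0 \<in> carrier_mat N (2*M)"
    using carrier_kron[OF carrier_ctrans[OF carrier_pad] carrier_bra0] by (simp add: mult.commute)
  show "kron (pad N M) ket0 \<in> carrier_mat (2*M) N"
    using carrier_kron[OF carrier_pad carrier_ket0] by (simp add: mult.commute)
qed (use assms in auto)

lemma sum_lessThan_double: "(\<Sum>a<2*(n::nat). g a) = (\<Sum>k<n. g (2*k) + g (2*k+1))"
  by (induction n) (simp_all add: sum.distrib add_ac)

lemma index_kron_one_mult_kron_one:
  assumes A: "A \<in> carrier_mat n n" and B: "B \<in> carrier_mat n n" and X: "X \<in> carrier_mat (2*n) (2*n)"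
    and i: "i < n" and j: "j < n"
  shows "(kron A (1\<^sub>m 2) * X * kron B (1\<^sub>m 2)) $$ (2*i, 2*j)
       = (A * mat n n (\<lambda>(l,k). X $$ (2*l, 2*k)) * B) $$ (i,j)"
proof -
  define Y where "Y = mat n n (\<lambda>(l,k). X $$ (2*l, 2*k))"
  have kA: "kron A (1\<^sub>m 2) \<in> carrier_mat (2*n) (2*n)" and kB: "kron B (1\<^sub>m 2) \<in> carrier_mat (2*n) (2*n)"
    using carrier_kron[OF A one_carrier_mat[of 2]] carrier_kron[OF B one_carrier_mat[of 2]] by (simp_all add: mult.commute)
  have kB_index: "kron B (1\<^sub>m 2) $$ (2*k, 2*j) = B $$ (k,j)" "kron B (1\<^sub>m 2) $$ (2*k+1, 2*j) = 0"
    if "k < n" for k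
    using B j that by (simp_all add: kron_def)
  have AX: "(kron A (1\<^sub>m 2) * X) $$ (2*i, 2*k) = (A * Y) $$ (i,k)" if k: "k < n" for k
  proof -
    have "(kron A (1\<^sub>m 2) * X) $$ (2*i, 2*k) = (\<Sum>b<2*n. kron A (1\<^sub>m 2) $$ (2*i, b) * X $$ (b, 2*k))"
      using kA X i k by (intro index_mult_mat_sum) auto
    also have "\<dots> = (\<Sum>l<n. A $$ (i,l) * Y $$ (l,k))"
      unfolding sum_lessThan_double using A i k by (intro sum.cong) (auto simp: kron_def Y_def)
    also have "\<dots> = (A * Y) $$ (i,k)"
      using A i k by (intro index_mult_mat_sum[symmetric]) (auto simp: Y_def)
    finally show ?thesis .
  qed
  have "(kron A (1\<^sub>m 2) * X * kron B (1\<^sub>m 2)) $$ (2*i, 2*j)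
      = (\<Sum>a<2*n. (kron A (1\<^sub>m 2) * X) $$ (2*i, a) * kron B (1\<^sub>m 2) $$ (a, 2*j))"
    using kA kB X i j by (intro index_mult_mat_sum) auto
  also have "\<dots> = (\<Sum>k<n. (A * Y) $$ (i,k) * B $$ (k,j))"
    unfolding sum_lessThan_double using kB_index AX by (intro sum.cong) auto
  also have "\<dots> = (A * Y * B) $$ (i,j)"
    using A B i j by (intro index_mult_mat_sum[symmetric]) (auto simp: Y_def)
  finally show ?thesis
    unfolding Y_def .
qed

lemma even_block_eq_diag_of:
  assumes UD: "UD \<in> carrier_mat (2*M) (2*M)"
    and col: "\<And>k. k < M \<Longrightarrow> UD *\<^sub>v unit_vec (2*M) (2*k) =
            p k \<cdot>\<^sub>v unit_vec (2*M) (2*k) + q k \<cdot>\<^sub>v unit_vec (2*M) (2*k+1)"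
  shows "mat M M (\<lambda>(l,k). UD $$ (2*l, 2*k)) = diag_of M p"
proof (rule eq_matI)
  fix l k assume "l < dim_row (diag_of M p)" "k < dim_col (diag_of M p)"
  then have lk: "l < M" "k < M" by (auto simp: diag_of_def)
  have "UD $$ (2*l, 2*k) = (UD *\<^sub>v unit_vec (2*M) (2*k)) $ (2*l)"
    using UD lk by (simp add: index_mult_mat_vec scalar_prod_right_unit)
  then show "mat M M (\<lambda>(l,k). UD $$ (2*l, 2*k)) $$ (l,k) = diag_of M p $$ (l,k)"
    using lk by (simp add: col diag_of_def)
qed (auto simp: diag_of_def)



lemma has_sum_sum_fun:
  fixes f :: "'k \<Rightarrow> 'a \<Rightarrow> 'b::topological_comm_monoid_add"
  assumes "finite K" and "\<And>k. k \<in> K \<Longrightarrow> (f k has_sum s k) A"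
  shows "((\<lambda>x. \<Sum>k\<in>K. f k x) has_sum (\<Sum>k\<in>K. s k)) A"
  using assms by (induction K rule: finite_induct) (auto intro: has_sum_add)

lemma cis_eq_1_imp_dvd:
  fixes n :: int
  assumes "0 < M" and "cis (2 * pi * of_int n / real M) = 1"
  shows "int M dvd n"
proof -
  have "cos (2 * pi * of_int n / real M) = 1"
    using assms(2) by (metis cis.sel(1) one_complex.sel(1))
  then obtain k :: int where "2 * pi * of_int n / real M = of_int k * 2 * pi"
    using cos_one_2pi_int by blast
  then have "of_int n = (of_int (k * int M) :: real)"
    using assms(1) by (simp add: field_simps)
  then show ?thesis
    by (simp only: of_int_eq_iff) simp
qed

lemma sum_roots_of_unity:
  fixes n :: int
  assumes M: "0 < M"
  shows "(\<Sum>k<M. cis (2 * pi * of_int n * real k / real M)) = (if int M dvd n then of_nat M else 0)"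
proof -
  define z where "z = cis (2 * pi * of_int n / real M)"
  have z_pow: "cis (2 * pi * of_int n * real k / real M) = z ^ k" for k
    by (simp add: z_def Complex.DeMoivre field_simps)
  show ?thesis
  proof (cases "int M dvd n")
    case True
    then obtain q where "n = int M * q" by (elim dvdE)
    then have "z = cis (2 * pi * of_int q)"
      using M by (simp add: z_def mult.assoc del: cis_multiple_2pi)
    then have "z = 1"
      by (simp only: cis_multiple_2pi Ints_of_int)
    then show ?thesis
      using True by (simp add: z_pow)
  next
    case False
    then have "z \<noteq> 1"
      using cis_eq_1_imp_dvd[OF M] by (auto simp: z_def)
    moreover have "z ^ M = 1"
      using M by (simp add: z_def Complex.DeMoivre)
    ultimately have "(\<Sum>k<M. z ^ k) = 0"
      using one_diff_power_eq[of z M] by simp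
    then show ?thesis
      using False by (simp add: z_pow)
  qed
qed

text \<open>Aliasing: sampling a Fourier series \<open>d k = (\<Sum>s. c s e^{-2\<pi>isk/M})\<close> on the \<open>M\<close>-point grid and
  taking the discrete Fourier transform folds the coefficients modulo \<open>M\<close>.\<close>
theorem aliasing_has_sum:
  fixes c :: "int \<Rightarrow> complex" and n :: int
  assumes M: "0 < M"
    and d: "\<And>k. k < M \<Longrightarrow> ((\<lambda>s. c s * cis (- (2 * pi * of_int s * real k / real M))) has_sum d k) UNIV"
  shows "((\<lambda>l. c (n - l * int M)) has_sum
           (\<Sum>k<M. d k * cis (2 * pi * of_int n * real k / real M)) / of_nat M) UNIV"
proof -
  have "((\<lambda>s. \<Sum>k<M. c s * cis (2 * pi * of_int (n - s) * real k / real M))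
      has_sum (\<Sum>k<M. d k * cis (2 * pi * of_int n * real k / real M))) UNIV"
  proof (intro has_sum_sum_fun finite_lessThan)
    fix k assume "k \<in> {..<M}"
    have "cis (- (2 * pi * of_int s * real k / real M)) * cis (2 * pi * of_int n * real k / real M)
        = cis (2 * pi * of_int (n - s) * real k / real M)" for s
      by (simp add: cis_mult algebra_simps diff_divide_distrib)
    then show "((\<lambda>s. c s * cis (2 * pi * of_int (n - s) * real k / real M))
        has_sum d k * cis (2 * pi * of_int n * real k / real M)) UNIV"
      using has_sum_cmult_left[OF d, of k "cis (2 * pi * of_int n * real k / real M)"] \<open>k \<in> {..<M}\<close>
      by (simp only: mult.assoc lessThan_iff)
  qed
  moreover have "((\<lambda>s. c s * of_nat M) has_sum D) {s. int M dvd (n - s)}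
      \<longleftrightarrow> ((\<lambda>s. \<Sum>k<M. c s * cis (2 * pi * of_int (n - s) * real k / real M)) has_sum D) UNIV" for D
    by (rule has_sum_cong_neutral)
       (simp_all add: sum_distrib_left[symmetric] sum_roots_of_unity[OF M] del: of_int_diff)
  ultimately have "((\<lambda>s. c s * of_nat M) has_sum
      (\<Sum>k<M. d k * cis (2 * pi * of_int n * real k / real M))) {s. int M dvd (n - s)}"
    by blast
  then have "((\<lambda>l. c (n - l * int M) * of_nat M) has_sum
      (\<Sum>k<M. d k * cis (2 * pi * of_int n * real k / real M))) UNIV"
    by (subst has_sum_reindex_bij_witness[where i="\<lambda>s. (n - s) div int M" and j="\<lambda>l. n - l * int M"])
       (use M in auto)
  from has_sum_divide_const[OF this, of "of_nat M"] show ?thesis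
    using M by simp
qed

lemma fourier_coeff_uminus:
  assumes "0 < h" and "continuous_on {-pi/h..pi/h} f" and "\<And>\<xi>. f (-\<xi>) = f \<xi>"
  shows "fourier_coeff h f (- r) = fourier_coeff h f r"
  using assms by (simp add: fourier_coeff_even)

lemma xi_bar_mem:
  assumes h: "0 < h" and "even M" and k: "k < M"
  shows "xi_bar h M k \<in> {-pi/h..pi/h}"
proof (cases "k < M div 2")
  case True
  then have "2 * real k \<le> real M"
    using \<open>even M\<close> by (auto elim!: evenE)
  then have "2 * pi * real k / (real M * h) \<le> pi / h"
    using h k by (simp add: field_simps)
  moreover have "0 \<le> 2 * pi * real k / (real M * h)" "- pi / h \<le> 0"
    using h by simp_all
  moreover have "xi_bar h M k = 2 * pi * real k / (real M * h)"
    using True by (simp add: xi_bar_def)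
  ultimately show ?thesis
    unfolding atLeastAtMost_iff by linarith
next
  case False
  then have "pi * real M \<le> pi * (2 * real k)" "pi * real k \<le> pi * real M"
    using \<open>even M\<close> k by (auto elim!: evenE)
  then show ?thesis
    using False h k by (simp add: xi_bar_def field_simps)
qed

lemma cis_xi_bar:
  assumes h: "0 < h" and M: "0 < M"
  shows "cis (- (of_int s * h * xi_bar h M k)) = cis (- (2 * pi * of_int s * real k / real M))"
proof (cases "k < M div 2")
  case True
  then show ?thesis
    using assms by (simp add: xi_bar_def field_simps)
next
  case False
  then have "- (of_int s * h * xi_bar h M k) = - (2 * pi * of_int s * real k / real M) + 2 * pi * of_int s"
    using assms by (simp add: xi_bar_def field_simps)
  then have "cis (- (of_int s * h * xi_bar h M k)) = cis (- (2 * pi * of_int s * real k / real M)) * cis (2 * pi * of_int s)"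
    by (simp only: cis_mult)
  then show ?thesis
    by simp
qed

lemma xi_bar_powr_has_sum:
  assumes h: "0 < h" and \<alpha>: "0 < \<alpha>" and M: "0 < M" "even M" and k: "k < M"
  shows "((\<lambda>s. kernel_c h \<alpha> s * cis (- (2 * pi * of_int s * real k / real M))) has_sum
           complex_of_real (\<bar>xi_bar h M k\<bar> powr \<alpha>)) UNIV"
proof -
  have "((\<lambda>s. kernel_c h \<alpha> s * cis (- (of_int s * h * xi_bar h M k))) has_sum
      complex_of_real (\<bar>xi_bar h M k\<bar> powr \<alpha>)) UNIV"
    unfolding kernel_c_eq_fourier_coeff
    by (rule fourier_series_has_sum[OF h continuous_on_abs_powr[OF \<alpha>] _
          kernel_c_abs_summable[OF h \<alpha>, unfolded kernel_c_eq_fourier_coeff] xi_bar_mem[OF h M(2) k]]) simp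
  then show ?thesis
    by (simp add: cis_xi_bar[OF h M(1)])
qed

lemma kernel_c_uminus:
  assumes "0 < h" "0 < \<alpha>"
  shows "kernel_c h \<alpha> (- r) = kernel_c h \<alpha> r"
  unfolding kernel_c_eq_fourier_coeff
  using assms by (intro fourier_coeff_uminus continuous_on_abs_powr) auto

theorem A_tilde_index:
  assumes h: "0 < h" and \<alpha>: "0 < \<alpha>" and M: "0 < M" "even M" and ij: "i < M" "j < M"
  shows "A_tilde h \<alpha> M $$ (i,j) = kernel_c h \<alpha> (int i - int j)
           + infsum (\<lambda>l. kernel_c h \<alpha> (int i - int j + l * int M)) (UNIV - {0})"
proof -
  define c where "c = (\<lambda>l. kernel_c h \<alpha> (int i - int j + l * int M))"
  have "A_tilde h \<alpha> M $$ (i,j) = (\<Sum>k<M. complex_of_real (\<bar>xi_bar h M k\<bar> powr \<alpha>)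
      * cis (2 * pi * of_int (int j - int i) * real k / real M)) / of_nat M"
    unfolding A_tilde_def by (rule QFT_conj_diag_index[OF ij])
  then have "((\<lambda>l. kernel_c h \<alpha> (int j - int i - l * int M)) has_sum A_tilde h \<alpha> M $$ (i,j)) UNIV"
    using aliasing_has_sum[OF M(1) xi_bar_powr_has_sum[OF h \<alpha> M], where n="int j - int i"] by simp
  moreover have "kernel_c h \<alpha> (int j - int i - l * int M) = c l" for l
    using kernel_c_uminus[OF h \<alpha>, of "int i - int j + l * int M"] by (simp add: c_def)
  ultimately have "(c has_sum A_tilde h \<alpha> M $$ (i,j)) UNIV"
    by simp
  from has_sum_Diff[OF this has_sum_finite[of "{0}" c]] have "infsum c (UNIV - {0}) = A_tilde h \<alpha> M $$ (i,j) - c 0"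
    by (simp add: infsumI)
  then show ?thesis
    by (simp add: c_def)
qed

lemma U_BE_even_block:
  assumes UD: "UD \<in> carrier_mat (2*M) (2*M)"
    and col: "\<And>k. k < M \<Longrightarrow> UD *\<^sub>v unit_vec (2*M) (2*k) =
            p k \<cdot>\<^sub>v unit_vec (2*M) (2*k) + q k \<cdot>\<^sub>v unit_vec (2*M) (2*k+1)"
  shows "mat M M (\<lambda>(i,j). U_BE M UD $$ (2*i, 2*j)) = QFT_inv M * diag_of M p * QFT M"
proof (rule eq_matI)
  fix i j assume "i < dim_row (QFT_inv M * diag_of M p * QFT M)" "j < dim_col (QFT_inv M * diag_of M p * QFT M)"
  then have "i < M" "j < M"
    by auto
  then show "mat M M (\<lambda>(i,j). U_BE M UD $$ (2*i, 2*j)) $$ (i,j) = (QFT_inv M * diag_of M p * QFT M) $$ (i,j)"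
    using index_kron_one_mult_kron_one[OF carrier_QFT_inv carrier_QFT UD] even_block_eq_diag_of[OF UD col]
    by (simp add: U_BE_def)
qed auto

lemma diag_of_phi:
  "diag_of M (\<lambda>k. complex_of_real (phi h \<alpha> M k))
     = complex_of_real (1 / lambda_max h \<alpha>) \<cdot>\<^sub>m diag_of M (\<lambda>k. complex_of_real (\<bar>xi_bar h M k\<bar> powr \<alpha>))"
  by (auto simp: diag_of_def phi_def)

lemma carrier_U_BE:
  assumes "UD \<in> carrier_mat (2*M) (2*M)"
  shows "U_BE M UD \<in> carrier_mat (2*M) (2*M)"
proof -
  have "kron (QFT_inv M) (1\<^sub>m 2) \<in> carrier_mat (2*M) (2*M)" "kron (QFT M) (1\<^sub>m 2) \<in> carrier_mat (2*M) (2*M)"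
    using carrier_kron[OF carrier_QFT_inv one_carrier_mat[of 2]] carrier_kron[OF carrier_QFT one_carrier_mat[of 2]]
    by (simp_all only: mult.commute)
  then show ?thesis
    unfolding U_BE_def using assms by (metis mult_carrier_mat)
qed

lemma A_mat_plus_E_mat:
  assumes "0 < h" "0 < \<alpha>" "0 < M" "even M" "N \<le> M"
  shows "A_mat h \<alpha> N + E_mat h \<alpha> N M = mat N N (\<lambda>(i,j). A_tilde h \<alpha> M $$ (i,j))"
proof (rule eq_matI)
  fix i j assume "i < dim_row (mat N N (\<lambda>(i,j). A_tilde h \<alpha> M $$ (i,j)))"
    "j < dim_col (mat N N (\<lambda>(i,j). A_tilde h \<alpha> M $$ (i,j)))"
  then have "i < N" "j < N" "i < M" "j < M"
    using \<open>N \<le> M\<close> by auto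
  then show "(A_mat h \<alpha> N + E_mat h \<alpha> N M) $$ (i,j) = mat N N (\<lambda>(i,j). A_tilde h \<alpha> M $$ (i,j)) $$ (i,j)"
    by (simp add: A_mat_def E_mat_def A_tilde_index[OF assms(1-4)])
qed (simp_all add: A_mat_def E_mat_def)

lemma kron_pad_mult_U_BE_mult_kron_pad:
  assumes UD: "UD \<in> carrier_mat (2*M) (2*M)" and "N \<le> M"
    and col: "\<And>k. k < M \<Longrightarrow> UD *\<^sub>v unit_vec (2*M) (2*k) =
            complex_of_real (phi h \<alpha> M k) \<cdot>\<^sub>v unit_vec (2*M) (2*k) + q k \<cdot>\<^sub>v unit_vec (2*M) (2*k+1)"
  shows "kron (ctrans (pad N M)) bra0 * U_BE M UD * kron (pad N M) ket0
      = complex_of_real (1 / lambda_max h \<alpha>) \<cdot>\<^sub>m mat N N (\<lambda>(i,j). A_tilde h \<alpha> M $$ (i,j))"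
proof -
  have "mat M M (\<lambda>(i,j). U_BE M UD $$ (2*i, 2*j))
      = QFT_inv M * diag_of M (\<lambda>k. complex_of_real (phi h \<alpha> M k)) * QFT M"
    using UD col by (rule U_BE_even_block)
  also have "\<dots> = complex_of_real (1 / lambda_max h \<alpha>) \<cdot>\<^sub>m A_tilde h \<alpha> M"
    unfolding diag_of_phi A_tilde_def
    by (simp add: mult_smult_distrib[OF carrier_QFT_inv carrier_diag_of]
        mult_smult_assoc_mat[OF mult_carrier_mat[OF carrier_QFT_inv carrier_diag_of] carrier_QFT])
  finally have block: "mat M M (\<lambda>(i,j). U_BE M UD $$ (2*i, 2*j))
      = complex_of_real (1 / lambda_max h \<alpha>) \<cdot>\<^sub>m A_tilde h \<alpha> M" .
  have "U_BE M UD $$ (2*i, 2*j) = complex_of_real (1 / lambda_max h \<alpha>) * A_tilde h \<alpha> M $$ (i,j)"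
    if "i < M" "j < M" for i j
    using arg_cong[where f="\<lambda>X. X $$ (i,j)", OF block] that carrier_matD[OF carrier_A_tilde[of h \<alpha> M]]
    by simp
  then show ?thesis
    unfolding kron_pad_mult_kron_pad[OF \<open>N \<le> M\<close> carrier_U_BE[OF UD]]
    using \<open>N \<le> M\<close> by (intro eq_matI) auto
qed

theorem theorem1:
  fixes h \<alpha> :: real and n m N M :: nat and UD :: "complex mat"
  assumes "h > 0" and "0 < \<alpha>" and "\<alpha> \<le> 2"
    and "N = 2 ^ n" and "M = 2 ^ m" and "M \<ge> 2 * N"
    and "unitary_mat (2 * M) UD"
    and "\<And>k. k < M \<Longrightarrow> mult_mat_vec UD (unit_vec (2 * M) (2 * k)) =
            complex_of_real (phi h \<alpha> M k) \<cdot>\<^sub>v unit_vec (2 * M) (2 * k)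
          + complex_of_real (sqrt (1 - (phi h \<alpha> M k)\<^sup>2)) \<cdot>\<^sub>v unit_vec (2 * M) (2 * k + 1)"
  shows "ctrans (pad N M) * A_tilde h \<alpha> M * pad N M = A_mat h \<alpha> N + E_mat h \<alpha> N M
       \<and> kron (ctrans (pad N M)) bra0 * U_BE M UD * kron (pad N M) ket0
           = complex_of_real (1 / lambda_max h \<alpha>) \<cdot>\<^sub>m (A_mat h \<alpha> N + E_mat h \<alpha> N M)"
proof
  have "0 < N" "N \<le> M"
    using assms(4,6) by simp_all
  moreover have "m \<noteq> 0"
    using assms(5,6) \<open>0 < N\<close> by (intro notI) simp
  ultimately have M: "0 < M" "even M"
    using assms(5) by simp_all
  have UD: "UD \<in> carrier_mat (2*M) (2*M)"
    using assms(7) by (simp add: unitary_mat_def)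
  have AE: "A_mat h \<alpha> N + E_mat h \<alpha> N M = mat N N (\<lambda>(i,j). A_tilde h \<alpha> M $$ (i,j))"
    using assms(1,2) M \<open>N \<le> M\<close> by (rule A_mat_plus_E_mat)
  then show "ctrans (pad N M) * A_tilde h \<alpha> M * pad N M = A_mat h \<alpha> N + E_mat h \<alpha> N M"
    using ctrans_pad_mult_pad[OF \<open>N \<le> M\<close> carrier_A_tilde] by simp
  show "kron (ctrans (pad N M)) bra0 * U_BE M UD * kron (pad N M) ket0
      = complex_of_real (1 / lambda_max h \<alpha>) \<cdot>\<^sub>m (A_mat h \<alpha> N + E_mat h \<alpha> N M)"
    unfolding AE using UD \<open>N \<le> M\<close> assms(8) by (rule kron_pad_mult_U_BE_mult_kron_pad)
qed

end
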